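(* Let $\Delta\in\{0,1,-1\}^{m\times m}$, regarded as a matrix over $\mathbb Q$, be a connection matrix with column/row partition $J_0,\dots,J_b$ which is totally unimodular. Let $\Delta^m$ be the last matrix produced by the Incremental Sweeping Algorithm applied to $\Delta$. Then for every position $(i,j)$ marked as a primary pivot, $\Delta^m_{ij}\in\{1,-1\}$.
   Context: A matrix is totally unimodular (TU) if every square submatrix has determinant in $\{0,1,-1\}$. $U^{pq}$ is the $m\times m$ matrix whose only nonzero entry is a $1$ in position $(p,q)$. Superscripts on matrices are indices, not powers. A connection matrix (over a field $\mathbb F$, here $\mathbb Q$) is a matrix $\Delta\in\mathbb F^{m\times m}$ together with a partition $\{1,\dots,m\}=J_0\sqcup\cdots\sqcup J_b$ (the column/row partition; the $J_k$ need not consist of consecutive integers) such that $\Delta$ is upper triangular, $\Delta\Delta=0$, and $\Delta_{ij}=0$ unless $i<j$ and $(i,j)\in\bigcup_{k=1}^bJ_{k-1}\times J_k$. For $1\le r\le m-1$ the $r$-th diagonal is $\{(j-r,j):r<j\le m\}$. Incremental Sweeping Algorithm (ISA) applied to a connection matrix $\Delta$: set $\Delta^0=\Delta^1=\Delta$. For $r=1,\dots,m-1$ in turn: (Markup) for every position $(j-r,j)$ on the $r$-th diagonal with $\Delta^r_{j-r,j}\ne0$ such that no position in column $j$ was marked as a primary pivot at an earlier iteration: if some position $(j-r,p)$ of row $j-r$ was marked as a primary pivot at an earlier iteration, mark $(j-r,j)$ as a change-of-basis pivot of iteration $r$; otherwise mark $(j-r,j)$ permanently as a primary pivot. (Update)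 Let $T^r=I-\sum \frac{\Delta^r_{j-r,j}}{\Delta^r_{j-r,p}}U^{pj}$, the sum running over all change-of-basis pivots $(j-r,j)$ of iteration $r$, where $(j-r,p)$ is the primary pivot position in row $j-r$; set $\Delta^{r+1}=(T^r)^{-1}\Delta^rT^r$. *)

theory Defs
  imports "Jordan_Normal_Form.Determinant" "Jordan_Normal_Form.DL_Submatrix"
begin

text \<open>Matrices are JNF matrices over rat; indices are 0-based, i.e. the paper's
  index k corresponds to k-1 here.\<close>

definition totally_unimodular :: "rat mat \<Rightarrow> bool" where
  "totally_unimodular A \<longleftrightarrow>
     (\<forall>I J. I \<subseteq> {0..<dim_row A} \<longrightarrow> J \<subseteq> {0..<dim_col A} \<longrightarrow> card I = card J \<longrightarrow>
        det (submatrix A I J) \<in> {0, 1, -1})"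

definition unit_mat :: "nat \<Rightarrow> nat \<Rightarrow> nat \<Rightarrow> rat mat" where
  "unit_mat m p q = mat m m (\<lambda>(a,c). if a = p \<and> c = q then 1 else 0)"

definition connection_matrix :: "nat \<Rightarrow> rat mat \<Rightarrow> nat \<Rightarrow> (nat \<Rightarrow> nat set) \<Rightarrow> bool" where
  "connection_matrix m D b J \<longleftrightarrow>
     D \<in> carrier_mat m m \<and>
     (\<Union>k\<in>{0..b}. J k) = {0..<m} \<and>
     (\<forall>k\<in>{0..b}. \<forall>k'\<in>{0..b}. k \<noteq> k' \<longrightarrow> J k \<inter> J k' = {}) \<and>
     (\<forall>i<m. \<forall>j<m. j < i \<longrightarrow> D $$ (i,j) = 0) \<and>
     D * D = 0\<^sub>m m m \<and>
     (\<forall>i<m. \<forall>j<m. D $$ (i,j) \<noteq> 0 \<longrightarrow>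
        i < j \<and> (\<exists>k\<in>{1..b}. i \<in> J (k - 1) \<and> j \<in> J k))"

text \<open>One iteration r of the ISA. State: (current matrix D^r, set of primary pivots
  marked at iterations before r). The r-th diagonal is {(i, i+r). i + r < m}.\<close>

definition isa_candidates :: "nat \<Rightarrow> nat \<Rightarrow> rat mat \<times> (nat \<times> nat) set \<Rightarrow> (nat \<times> nat) set" where
  "isa_candidates m r st =
     {(i, j). j < m \<and> r \<le> j \<and> i = j - r \<and> fst st $$ (i, j) \<noteq> 0 \<and>
              \<not> (\<exists>i'. (i', j) \<in> snd st)}"

definition isa_cob :: "nat \<Rightarrow> nat \<Rightarrow> rat mat \<times> (nat \<times> nat) set \<Rightarrow> (nat \<times> nat) set" where
  "isa_cob m r st = {(i, j) \<in> isa_candidates m r st. \<exists>p. (i, p) \<in> snd st}"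

definition isa_prim_col :: "(nat \<times> nat) set \<Rightarrow> nat \<Rightarrow> nat" where
  "isa_prim_col P i = (THE p. (i, p) \<in> P)"

definition isa_T :: "nat \<Rightarrow> nat \<Rightarrow> rat mat \<times> (nat \<times> nat) set \<Rightarrow> rat mat" where
  "isa_T m r st =
     mat m m (\<lambda>(a, c). (if a = c then 1 else 0) -
        (\<Sum>(i, j)\<in>isa_cob m r st.
           fst st $$ (i, j) / fst st $$ (i, isa_prim_col (snd st) i)
           * unit_mat m (isa_prim_col (snd st) i) j $$ (a, c)))"

definition mat_inv :: "rat mat \<Rightarrow> rat mat" where
  "mat_inv T = (SOME B. inverts_mat T B \<and> inverts_mat B T)"

definition isa_step :: "nat \<Rightarrow> nat \<Rightarrow> rat mat \<times> (nat \<times> nat) set \<Rightarrow> rat mat \<times> (nat \<times> nat) set" where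
  "isa_step m r st =
     (let T = isa_T m r st
      in (mat_inv T * fst st * T,
          snd st \<union> (isa_candidates m r st - isa_cob m r st)))"

text \<open>isa_state m D n = (D^{n+1}, primary pivots marked in iterations 1..n).\<close>
primrec isa_state :: "nat \<Rightarrow> rat mat \<Rightarrow> nat \<Rightarrow> rat mat \<times> (nat \<times> nat) set" where
  "isa_state m D 0 = (D, {})"
| "isa_state m D (Suc n) = isa_step m (Suc n) (isa_state m D n)"

definition isa_final_matrix :: "nat \<Rightarrow> rat mat \<Rightarrow> rat mat" where
  "isa_final_matrix m D = fst (isa_state m D (m - 1))"

definition isa_primary_pivots :: "nat \<Rightarrow> rat mat \<Rightarrow> (nat \<times> nat) set" where
  "isa_primary_pivots m D = snd (isa_state m D (m - 1))"

end

theory Submission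
  imports Defs
begin

(* The ISA only ever performs unimodular triangular changes of basis:
   T = 1 - N with N * N = 0, where every column operation of T adds a multiple of a
   primary pivot column p to a later column j, and the matching row operation of
   T^-1 = 1 + N adds a multiple of row j to row p.  We record, as a locale
   isa_invariant, what holds after diagonals 1..n have been swept (strictly upper
   triangular, square-zero, one nonzero pivot per row and column, zeros below the
   pivot of each column within the swept band) and show that one iteration preserves it.

   The key observation is then: for a set Q of final primary pivots that is closed under
   taking pivots lying lower and further left, no row of Q is a pivot column (so it never
   receives a row operation) and the columns of Q are closed under the column operations
   used, so every iteration
   leaves the minor of the matrix on rows fst`Q and columns snd`Q unchanged.  In the
   final matrix this block is triangular up to a column permutation, so its determinant
   is, up to sign, the product of the pivots in Q.  By total unimodularity each such
   nonzero product equals 1, and comparing the blocks with and without a given pivot (i,p) shows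
   that each pivot has absolute value 1. *)

declare pick.simps[simp del]

lemma sum_eq_single_term:
  assumes "finite S" "k \<in> S" "\<And>l. l \<in> S \<Longrightarrow> l \<noteq> k \<Longrightarrow> f l = 0"
  shows "sum f S = f k"
proof -
  have "sum f S = f k + sum f (S - {k})" using assms by (subst sum.remove[of _ k]) auto
  also have "sum f (S - {k}) = 0" using assms by (intro sum.neutral) auto
  finally show ?thesis by simp
qed

abbreviation (input) pick_index :: "nat set \<Rightarrow> nat \<Rightarrow> nat" where
  "pick_index I i \<equiv> card {a\<in>I. a < i}"

lemma pick_index_less:
  assumes "finite I" "i \<in> I"
  shows "pick_index I i < card I"
  using assms by (intro psubset_card_mono) auto

lemma pick_delete:
  assumes fin: "finite I" and u: "u < card I" and w: "w < card I - 1"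
  shows "pick (I - {pick I u}) w = pick I (if w < u then w else Suc w)"
proof -
  define w' where "w' = (if w < u then w else Suc w)"
  have w'lt: "w' < card I" using u w unfolding w'_def by auto
  let ?y = "pick I u" and ?x = "pick I w'"
  have xI: "?x \<in> I" using pick_in_set w'lt by auto
  have xy: "?x \<noteq> ?y"
    using pick_mono[of u I w'] pick_mono[of w' I u] u w'lt unfolding w'_def
    by (cases "w < u") auto
  have cx: "card {a\<in>I. a < ?x} = w'" using card_pick w'lt by auto
  have "card {a\<in>I - {?y}. a < ?x} = w"
  proof (cases "w < u")
    case True
    then have "?x < ?y" using pick_mono[of u I w'] u unfolding w'_def by auto
    then have "{a\<in>I - {?y}. a < ?x} = {a\<in>I. a < ?x}" by auto
    then show ?thesis using cx True unfolding w'_def by auto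
  next
    case False
    then have "?y < ?x" using pick_mono[of w' I u] w'lt unfolding w'_def by auto
    then have eq: "{a\<in>I - {?y}. a < ?x} = {a\<in>I. a < ?x} - {?y}" by auto
    have "?y \<in> {a\<in>I. a < ?x}" using \<open>?y < ?x\<close> pick_in_set u by auto
    then have "card ({a\<in>I. a < ?x} - {?y}) = w' - 1" using cx fin by (simp add: card_Diff_singleton)
    then show ?thesis using eq False unfolding w'_def by auto
  qed
  then have "pick (I - {?y}) w = ?x"
    using pick_card_in_set[of ?x "I - {?y}"] xI xy by auto
  then show ?thesis unfolding w'_def .
qed

lemma pick_bij_betw:
  assumes "finite I"
  shows "bij_betw (pick I) {..<card I} I"
proof (rule bij_betw_imageI)
  show "inj_on (pick I) {..<card I}"
  proof (rule linorder_inj_onI')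
    fix i j assume "i \<in> {..<card I}" "j \<in> {..<card I}" "i < j"
    then show "pick I i \<noteq> pick I j" by (intro less_imp_neq pick_mono) auto
  qed
  show "pick I ` {..<card I} = I"
  proof
    show "pick I ` {..<card I} \<subseteq> I" using pick_in_set by auto
    show "I \<subseteq> pick I ` {..<card I}"
    proof
      fix i assume "i \<in> I"
      then have "pick I (pick_index I i) \<in> pick I ` {..<card I}"
        using pick_index_less[OF assms] by blast
      then show "i \<in> pick I ` {..<card I}" using pick_card_in_set[OF \<open>i \<in> I\<close>] by simp
    qed
  qed
qed

lemma submatrix_dims:
  assumes "A \<in> carrier_mat nr nc" "I \<subseteq> {..<nr}" "J \<subseteq> {..<nc}"
  shows "dim_row (submatrix A I J) = card I" "dim_col (submatrix A I J) = card J"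
proof -
  have "{i. i < nr \<and> i \<in> I} = I" "{j. j < nc \<and> j \<in> J} = J" using assms by auto
  then show "dim_row (submatrix A I J) = card I" "dim_col (submatrix A I J) = card J"
    using assms by (auto simp: dim_submatrix)
qed

lemma submatrix_carrier:
  assumes "A \<in> carrier_mat nr nc" "I \<subseteq> {..<nr}" "J \<subseteq> {..<nc}"
  shows "submatrix A I J \<in> carrier_mat (card I) (card J)"
  using submatrix_dims[OF assms] by auto

lemma submatrix_idx:
  assumes "A \<in> carrier_mat nr nc" "I \<subseteq> {..<nr}" "J \<subseteq> {..<nc}" "u < card I" "v < card J"
  shows "submatrix A I J $$ (u,v) = A $$ (pick I u, pick J v)"
proof -
  have "{i. i < nr \<and> i \<in> I} = I" "{j. j < nc \<and> j \<in> J} = J" using assms by auto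
  then show ?thesis using assms by (intro submatrix_index) auto
qed

lemma submatrix_cong:
  assumes A: "A \<in> carrier_mat nr nc" and B: "B \<in> carrier_mat nr nc"
    and I: "I \<subseteq> {..<nr}" and J: "J \<subseteq> {..<nc}"
    and eq: "\<And>x y. x \<in> I \<Longrightarrow> y \<in> J \<Longrightarrow> A $$ (x,y) = B $$ (x,y)"
  shows "submatrix A I J = submatrix B I J"
proof (rule eq_matI)
  fix u v assume "u < dim_row (submatrix B I J)" "v < dim_col (submatrix B I J)"
  then have u: "u < card I" and v: "v < card J" using submatrix_dims[OF B I J] by auto
  then show "submatrix A I J $$ (u,v) = submatrix B I J $$ (u,v)"
    using submatrix_idx[OF A I J u v] submatrix_idx[OF B I J u v] eq pick_in_set by simp
qed (use submatrix_dims[OF A I J] submatrix_dims[OF B I J] in auto)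

lemma mat_delete_submatrix:
  assumes A: "A \<in> carrier_mat nr nc" and I: "I \<subseteq> {..<nr}" and J: "J \<subseteq> {..<nc}"
    and u: "u < card I" and v: "v < card J"
  shows "mat_delete (submatrix A I J) u v = submatrix A (I - {pick I u}) (J - {pick J v})"
proof -
  have fin: "finite I" "finite J" using I J finite_subset by auto
  have I': "I - {pick I u} \<subseteq> {..<nr}" "J - {pick J v} \<subseteq> {..<nc}" using I J by auto
  have cI: "card (I - {pick I u}) = card I - 1" using pick_in_set u fin by (simp add: card_Diff_singleton)
  have cJ: "card (J - {pick J v}) = card J - 1" using pick_in_set v fin by (simp add: card_Diff_singleton)
  show ?thesis
  proof (rule eq_matI)
    fix i j assume "i < dim_row (submatrix A (I - {pick I u}) (J - {pick J v}))"
      "j < dim_col (submatrix A (I - {pick I u}) (J - {pick J v}))"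
    then have i: "i < card I - 1" and j: "j < card J - 1"
      using submatrix_dims[OF A I'] cI cJ by auto
    have "mat_delete (submatrix A I J) u v $$ (i,j) =
        submatrix A I J $$ (if i < u then i else Suc i, if j < v then j else Suc j)"
      unfolding mat_delete_def using i j submatrix_dims[OF A I J] by auto
    also have "\<dots> = A $$ (pick I (if i < u then i else Suc i), pick J (if j < v then j else Suc j))"
      using i j by (intro submatrix_idx[OF A I J]) auto
    also have "\<dots> = A $$ (pick (I - {pick I u}) i, pick (J - {pick J v}) j)"
      using pick_delete[OF fin(1) u i] pick_delete[OF fin(2) v j] by simp
    also have "\<dots> = submatrix A (I - {pick I u}) (J - {pick J v}) $$ (i,j)"
      using i j cI cJ by (intro submatrix_idx[OF A I', symmetric]) auto
    finally show "mat_delete (submatrix A I J) u v $$ (i,j) =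
        submatrix A (I - {pick I u}) (J - {pick J v}) $$ (i,j)" .
  qed (use submatrix_dims[OF A I J] submatrix_dims[OF A I'] cI cJ in auto)
qed

lemma mat_mult_index_sum:
  assumes "X \<in> carrier_mat nr k" "Y \<in> carrier_mat k nc" "i < nr" "j < nc"
  shows "(X * Y) $$ (i,j) = (\<Sum>l<k. X $$ (i,l) * Y $$ (l,j))"
  using assms by (simp add: scalar_prod_def lessThan_atLeast0)

lemma submatrix_mult_closed:
  fixes A T :: "'a :: comm_ring_1 mat"
  assumes A: "A \<in> carrier_mat nr m" and T: "T \<in> carrier_mat m m"
    and I: "I \<subseteq> {..<nr}" and J: "J \<subseteq> {..<m}"
    and closed: "\<And>k y. k < m \<Longrightarrow> k \<notin> J \<Longrightarrow> y \<in> J \<Longrightarrow> T $$ (k,y) = 0"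
  shows "submatrix (A * T) I J = submatrix A I J * submatrix T J J"
proof (rule eq_matI)
  have S1: "submatrix A I J \<in> carrier_mat (card I) (card J)" and S2: "submatrix T J J \<in> carrier_mat (card J) (card J)"
    using submatrix_carrier[OF A I J] submatrix_carrier[OF T J J] .
  fix u v assume "u < dim_row (submatrix A I J * submatrix T J J)" "v < dim_col (submatrix A I J * submatrix T J J)"
  then have u: "u < card I" and v: "v < card J" using S1 S2 by auto
  define x where "x = pick I u"
  define y where "y = pick J v"
  have x: "x < nr" and yJ: "y \<in> J" and ym: "y < m"
    unfolding x_def y_def using pick_in_set u v I J by auto
  have "submatrix (A * T) I J $$ (u,v) = (A * T) $$ (x,y)"
    unfolding x_def y_def using A T by (intro submatrix_idx[OF _ I J u v]) auto
  also have "\<dots> = (\<Sum>k<m. A $$ (x,k) * T $$ (k,y))"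
    by (rule mat_mult_index_sum[OF A T x ym])
  also have "\<dots> = (\<Sum>k\<in>J. A $$ (x,k) * T $$ (k,y))"
    using J closed yJ by (intro sum.mono_neutral_right) auto
  also have "\<dots> = (\<Sum>w<card J. A $$ (x, pick J w) * T $$ (pick J w, y))"
    using sum.reindex_bij_betw[OF pick_bij_betw, of J "\<lambda>k. A $$ (x,k) * T $$ (k,y)"] J finite_subset
    by (metis finite_lessThan)
  also have "\<dots> = (submatrix A I J * submatrix T J J) $$ (u,v)"
    using S1 S2 u v unfolding x_def y_def
    by (simp add: scalar_prod_def lessThan_atLeast0 submatrix_idx[OF A I J] submatrix_idx[OF T J J])
  finally show "submatrix (A * T) I J $$ (u,v) = (submatrix A I J * submatrix T J J) $$ (u,v)" .
qed (use submatrix_dims[OF mult_carrier_mat[OF A T] I J] submatrix_dims[OF A I J] submatrix_dims[OF T J J] in auto)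

lemma det_single_entry_column:
  fixes S :: "'a :: comm_ring_1 mat"
  assumes S: "S \<in> carrier_mat k k" and u: "u < k" and v: "v < k"
    and zero: "\<And>w. w < k \<Longrightarrow> w \<noteq> u \<Longrightarrow> S $$ (w,v) = 0"
  shows "det S = S $$ (u,v) * cofactor S u v"
proof -
  have "det S = (\<Sum>w<k. S $$ (w,v) * cofactor S w v)"
    using laplace_expansion_column[OF S v] .
  also have "\<dots> = S $$ (u,v) * cofactor S u v"
    using u zero by (intro sum_eq_single_term) auto
  finally show ?thesis .
qed

lemma abs_det_submatrix_split:
  fixes M :: "'a :: linordered_idom mat"
  assumes M: "M \<in> carrier_mat nr nc" and I: "I \<subseteq> {..<nr}" and J: "J \<subseteq> {..<nc}"
    and a0: "a0 \<in> I" and c0: "c0 \<in> J" and cIJ: "card I = card J"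
    and zero: "\<And>a. a \<in> I \<Longrightarrow> a \<noteq> a0 \<Longrightarrow> M $$ (a,c0) = 0"
  shows "\<bar>det (submatrix M I J)\<bar> = \<bar>M $$ (a0,c0)\<bar> * \<bar>det (submatrix M (I - {a0}) (J - {c0}))\<bar>"
proof -
  have fin: "finite I" "finite J" using I J finite_subset by auto
  define u where "u = pick_index I a0"
  define v where "v = pick_index J c0"
  have u: "u < card I" and pu: "pick I u = a0"
    unfolding u_def using pick_index_less[OF fin(1) a0] pick_card_in_set[OF a0] by auto
  have v: "v < card I" and pv: "pick J v = c0"
    unfolding v_def using pick_index_less[OF fin(2) c0] pick_card_in_set[OF c0] cIJ by auto
  have S: "submatrix M I J \<in> carrier_mat (card I) (card I)"
    using submatrix_carrier[OF M I J] cIJ by simp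
  have "det (submatrix M I J) = submatrix M I J $$ (u,v) * cofactor (submatrix M I J) u v"
  proof (rule det_single_entry_column[OF S u v])
    fix w assume "w < card I" "w \<noteq> u"
    moreover have "pick I w \<noteq> a0"
      using pick_mono[of u I w] pick_mono[of w I u] u pu \<open>w < card I\<close> \<open>w \<noteq> u\<close>
      by (cases "w < u") auto
    ultimately show "submatrix M I J $$ (w,v) = 0"
      using submatrix_idx[OF M I J, of w v] v cIJ pv zero pick_in_set by auto
  qed
  moreover have "submatrix M I J $$ (u,v) = M $$ (a0,c0)"
    using submatrix_idx[OF M I J u] v cIJ pu pv by simp
  moreover have "mat_delete (submatrix M I J) u v = submatrix M (I - {a0}) (J - {c0})"
    using mat_delete_submatrix[OF M I J u] v cIJ pu pv by simp
  ultimately show ?thesis unfolding cofactor_def by (simp add: abs_mult power_abs)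
qed

lemma abs_det_pivot_block:
  fixes M :: "'a :: linordered_idom mat"
  assumes M: "M \<in> carrier_mat nr nc" and fin: "finite Q" and Qm: "Q \<subseteq> {..<nr} \<times> {..<nc}"
    and rows: "inj_on fst Q" and cols: "inj_on snd Q"
    and below: "\<And>a c a' c'. (a,c) \<in> Q \<Longrightarrow> (a',c') \<in> Q \<Longrightarrow> a < a' \<Longrightarrow> M $$ (a',c) = 0"
  shows "\<bar>det (submatrix M (fst`Q) (snd`Q))\<bar> = (\<Prod>(a,c)\<in>Q. \<bar>M $$ (a,c)\<bar>)"
  using fin Qm rows cols below
proof (induction Q rule: finite_remove_induct)
  case empty
  have "submatrix M {} {} \<in> carrier_mat 0 0" using submatrix_carrier[OF M] by fastforce
  then show ?case by (simp add: det_dim_zero)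
next
  case (remove Q)
  define a0 where "a0 = Min (fst`Q)"
  have "a0 \<in> fst`Q" unfolding a0_def using remove.hyps by auto
  then obtain c0 where q0: "(a0,c0) \<in> Q" by auto
  define Q' where "Q' = Q - {(a0,c0)}"
  have fstQ': "fst`Q' = fst`Q - {a0}"
    unfolding Q'_def using inj_on_image_set_diff[OF remove.prems(2), of Q "{(a0,c0)}"] q0 by simp
  have sndQ': "snd`Q' = snd`Q - {c0}"
    unfolding Q'_def using inj_on_image_set_diff[OF remove.prems(3), of Q "{(a0,c0)}"] q0 by simp
  have Im: "fst`Q \<subseteq> {..<nr}" and Jm: "snd`Q \<subseteq> {..<nc}" using remove.prems(1) by auto
  have cIJ: "card (fst`Q) = card (snd`Q)"
    using card_image[OF remove.prems(2)] card_image[OF remove.prems(3)] by simp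
  have a0Q: "a0 \<in> fst`Q" and c0Q: "c0 \<in> snd`Q" using q0 by force+
  have "M $$ (a,c0) = 0" if "a \<in> fst`Q" "a \<noteq> a0" for a
  proof -
    have "a0 < a" using that remove.hyps(1) unfolding a0_def by (simp add: order.not_eq_order_implies_strict)
    then show ?thesis using that q0 remove.prems(4) by force
  qed
  then have "\<bar>det (submatrix M (fst`Q) (snd`Q))\<bar>
      = \<bar>M $$ (a0,c0)\<bar> * \<bar>det (submatrix M (fst`Q') (snd`Q'))\<bar>"
    unfolding fstQ' sndQ' by (rule abs_det_submatrix_split[OF M Im Jm a0Q c0Q cIJ])
  also have "\<dots> = \<bar>M $$ (a0,c0)\<bar> * (\<Prod>(a,c)\<in>Q'. \<bar>M $$ (a,c)\<bar>)"
    unfolding Q'_def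
    by (subst remove.IH[OF q0]) (use remove.prems in \<open>auto intro: inj_on_subset\<close>)
  also have "\<dots> = (\<Prod>(a,c)\<in>Q. \<bar>M $$ (a,c)\<bar>)"
    unfolding Q'_def using remove.hyps(1) q0 by (simp add: prod.remove)
  finally show ?case .
qed

lemma det_principal_submatrix_unitriangular:
  fixes T :: "'a :: comm_ring_1 mat"
  assumes T: "T \<in> carrier_mat m m" and J: "J \<subseteq> {..<m}"
    and ut: "upper_triangular T" and diag: "\<And>k. k < m \<Longrightarrow> T $$ (k,k) = 1"
  shows "det (submatrix T J J) = 1"
proof -
  have S: "submatrix T J J \<in> carrier_mat (card J) (card J)" by (rule submatrix_carrier[OF T J J])
  have pm: "pick J u < m" if "u < card J" for u using pick_in_set that J by auto
  have "upper_triangular (submatrix T J J)"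
  proof
    fix u v assume "v < u" "u < dim_row (submatrix T J J)"
    then have "v < card J" "u < card J" "pick J v < pick J u" using S pick_mono[of u J v] by auto
    then show "submatrix T J J $$ (u,v) = 0"
      using submatrix_idx[OF T J J] ut T pm by auto
  qed
  then have "det (submatrix T J J) = (\<Prod>u = 0 ..< card J. submatrix T J J $$ (u,u))"
    using det_upper_triangular[OF _ S] S by (simp add: prod_list_diag_prod)
  also have "\<dots> = 1"
    using submatrix_idx[OF T J J] diag pm by (intro prod.neutral) auto
  finally show ?thesis .
qed

lemma mat_inv_one_minus_square_zero:
  assumes N: "N \<in> carrier_mat m m" and NN: "N * N = 0\<^sub>m m m"
  shows "(1\<^sub>m m - N) * (1\<^sub>m m + N) = 1\<^sub>m m" and "mat_inv (1\<^sub>m m - N) = 1\<^sub>m m + N"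
proof -
  let ?T = "1\<^sub>m m - N" and ?T' = "1\<^sub>m m + N"
  have "?T * ?T' = 1\<^sub>m m * ?T' - N * ?T'"
    using N by (intro minus_mult_distrib_mat) auto
  also have "N * ?T' = N * 1\<^sub>m m + N * N" using N by (intro mult_add_distrib_mat) auto
  finally show TT': "?T * ?T' = 1\<^sub>m m" using NN N by (intro eq_matI) auto
  have "?T' * ?T = 1\<^sub>m m * ?T + N * ?T" using N by (intro add_mult_distrib_mat) auto
  also have "N * ?T = N * 1\<^sub>m m - N * N" using N by (intro mult_minus_distrib_mat) auto
  finally have T'T: "?T' * ?T = 1\<^sub>m m" using NN N by (intro eq_matI) auto
  define B where "B = mat_inv ?T"
  have "inverts_mat ?T B \<and> inverts_mat B ?T"
    unfolding B_def mat_inv_def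
    by (rule someI_ex, rule exI[of _ ?T']) (use TT' T'T N in \<open>auto simp: inverts_mat_def\<close>)
  then have TB: "?T * B = 1\<^sub>m m" and BT: "B * ?T = 1\<^sub>m (dim_row B)"
    unfolding inverts_mat_def using N by auto
  have B: "B \<in> carrier_mat m m"
    using arg_cong[OF TB, of dim_col] arg_cong[OF BT, of dim_col] N by auto
  have "B = B * (?T * ?T')" using TT' B by simp
  also have "\<dots> = (B * ?T) * ?T'" using B N by (intro assoc_mult_mat[symmetric]) auto
  also have "\<dots> = ?T'" using BT B N by simp
  finally show "mat_inv ?T = ?T'" unfolding B_def .
qed

lemma similar_square_zero:
  fixes A T T' :: "'a :: semiring_1 mat"
  assumes A: "A \<in> carrier_mat m m" and T: "T \<in> carrier_mat m m" and T': "T' \<in> carrier_mat m m"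
    and inv: "T * T' = 1\<^sub>m m" and sq: "A * A = 0\<^sub>m m m"
  shows "(T' * A * T) * (T' * A * T) = 0\<^sub>m m m"
proof -
  define X where "X = T' * A"
  have X: "X \<in> carrier_mat m m" unfolding X_def using A T' by auto
  have "T * X = (T * T') * A" unfolding X_def using assoc_mult_mat[OF T T' A] by simp
  then have TX: "T * X = A" using inv left_mult_one_mat[OF A] by simp
  have "(X * T) * (X * T) = X * (T * (X * T))" using assoc_mult_mat[OF X T, of "X * T" m] X T by simp
  also have "T * (X * T) = A * T" using assoc_mult_mat[OF T X T] TX by simp
  also have "X * (A * T) = X * A * T" using assoc_mult_mat[OF X A T] by simp
  also have "X * A = T' * (A * A)" unfolding X_def using assoc_mult_mat[OF T' A A] .
  finally show ?thesis using sq T T' unfolding X_def by simp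
qed

text \<open>The state after sweeping diagonals 1..n: the matrix A is strictly upper triangular and
  square-zero, the primary pivots P lie on diagonals 1..n, at most one per row and column,
  are nonzero, and within the swept band every entry of a column that is not above its
  pivot vanishes (for columns without pivot: every entry within the band).\<close>
locale isa_invariant =
  fixes m n :: nat and A :: "rat mat" and P :: "(nat \<times> nat) set"
  assumes A_carrier: "A \<in> carrier_mat m m"
    and strictly_upper: "\<And>x y. x < m \<Longrightarrow> y < m \<Longrightarrow> y \<le> x \<Longrightarrow> A $$ (x,y) = 0"
    and pivot_band: "\<And>a c. (a,c) \<in> P \<Longrightarrow> a < c \<and> c < m \<and> c - a \<le> n"
    and pivot_row_unique: "\<And>a c c'. (a,c) \<in> P \<Longrightarrow> (a,c') \<in> P \<Longrightarrow> c = c'"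
    and pivot_col_unique: "\<And>a a' c. (a,c) \<in> P \<Longrightarrow> (a',c) \<in> P \<Longrightarrow> a = a'"
    and pivot_nonzero: "\<And>a c. (a,c) \<in> P \<Longrightarrow> A $$ (a,c) \<noteq> 0"
    and swept_zero: "\<And>x y. x < y \<Longrightarrow> y < m \<Longrightarrow> y - x \<le> n \<Longrightarrow>
       (\<And>a. (a,y) \<in> P \<Longrightarrow> a < x) \<Longrightarrow> A $$ (x,y) = 0"
    and square_zero: "A * A = 0\<^sub>m m m"
begin

definition cand :: "(nat \<times> nat) set" where "cand = isa_candidates m (Suc n) (A,P)"
definition cob :: "(nat \<times> nat) set" where "cob = isa_cob m (Suc n) (A,P)"
definition new :: "(nat \<times> nat) set" where "new = cand - cob"
definition prim_col :: "nat \<Rightarrow> nat" where "prim_col = isa_prim_col P"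
definition cob_col :: "nat \<Rightarrow> bool" where
  "cob_col y \<longleftrightarrow> Suc n \<le> y \<and> (y - Suc n, y) \<in> cob"
definition cob_coeff :: "nat \<Rightarrow> rat" where
  "cob_coeff y = A $$ (y - Suc n, y) / A $$ (y - Suc n, prim_col (y - Suc n))"

text \<open>The change of basis is T = 1 - N; column y of N holds cob_coeff y in the row of the
  primary pivot column that is subtracted from y.\<close>
definition N :: "rat mat" where
  "N = mat m m (\<lambda>(a,c). if cob_col c \<and> a = prim_col (c - Suc n) then cob_coeff c else 0)"

lemma cand_iff: "(i,j) \<in> cand \<longleftrightarrow>
    j < m \<and> Suc n \<le> j \<and> i = j - Suc n \<and> A $$ (i,j) \<noteq> 0 \<and> \<not>(\<exists>i'. (i',j) \<in> P)"
  unfolding cand_def isa_candidates_def by auto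

lemma cob_iff: "(i,j) \<in> cob \<longleftrightarrow> (i,j) \<in> cand \<and> (\<exists>p. (i,p) \<in> P)"
  unfolding cob_def cand_def isa_cob_def by auto

lemma new_iff: "(a,c) \<in> new \<longleftrightarrow> (a,c) \<in> cand \<and> \<not>(\<exists>p. (a,p) \<in> P)"
  by (auto simp: new_def cob_iff)

lemma newD: "(a,c) \<in> new \<Longrightarrow> a < c \<and> c < m \<and> c - a = Suc n \<and> a = c - Suc n \<and>
    A $$ (a,c) \<noteq> 0 \<and> (\<forall>a'. (a',c) \<notin> P) \<and> (\<forall>p. (a,p) \<notin> P)"
  unfolding new_iff cand_iff by auto

lemma prim_col_eq: "(i,p) \<in> P \<Longrightarrow> prim_col i = p"
  unfolding prim_col_def isa_prim_col_def using pivot_row_unique by (intro the_equality) auto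

lemma cob_colD:
  assumes "cob_col y"
  shows "y < m" "Suc n \<le> y" "(y - Suc n, prim_col (y - Suc n)) \<in> P" "A $$ (y - Suc n, y) \<noteq> 0"
    "\<And>a. (a,y) \<notin> P" "y - Suc n < prim_col (y - Suc n)" "prim_col (y - Suc n) < y"
    "A $$ (y - Suc n, prim_col (y - Suc n)) \<noteq> 0"
proof -
  have c: "(y - Suc n, y) \<in> cand" "\<exists>p. (y - Suc n, p) \<in> P" "Suc n \<le> y"
    using assms unfolding cob_col_def cob_iff by auto
  then show "y < m" "Suc n \<le> y" "A $$ (y - Suc n, y) \<noteq> 0" "\<And>a. (a,y) \<notin> P"
    unfolding cand_iff by auto
  from c obtain p where p: "(y - Suc n, p) \<in> P" by auto
  then show pP: "(y - Suc n, prim_col (y - Suc n)) \<in> P" using prim_col_eq by simp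
  show "y - Suc n < prim_col (y - Suc n)" using pivot_band[OF pP] by simp
  show "prim_col (y - Suc n) < y" using pivot_band[OF pP] c(3) by linarith
  show "A $$ (y - Suc n, prim_col (y - Suc n)) \<noteq> 0" using pivot_nonzero[OF pP] .
qed

lemma cob_cob_col: "(i,j) \<in> cob \<Longrightarrow> cob_col j \<and> i = j - Suc n"
  unfolding cob_col_def using cob_iff cand_iff by auto

lemma finite_cob: "finite cob"
  by (rule finite_subset[of _ "{..<m} \<times> {..<m}"]) (auto simp: cob_iff cand_iff)

lemma N_carrier: "N \<in> carrier_mat m m" unfolding N_def by simp

lemma N_index: "a < m \<Longrightarrow> c < m \<Longrightarrow>
    N $$ (a,c) = (if cob_col c \<and> a = prim_col (c - Suc n) then cob_coeff c else 0)"
  unfolding N_def by simp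

lemma N_nonzeroD:
  assumes "N $$ (a,c) \<noteq> 0" "a < m" "c < m"
  shows "cob_col c" "a = prim_col (c - Suc n)" "a < c"
  using assms cob_colD(7)[of c] by (auto simp: N_index split: if_splits)

text \<open>The matrix isa_T of the definition is 1 - N: in the defining sum only the term of
  the change-of-basis pivot in column c can contribute to entry (a,c).\<close>
lemma isa_T_eq: "isa_T m (Suc n) (A,P) = 1\<^sub>m m - N"
proof (rule eq_matI)
  fix a c assume "a < dim_row (1\<^sub>m m - N)" "c < dim_col (1\<^sub>m m - N)"
  then have am: "a < m" and cm: "c < m" using N_carrier by auto
  define f where "f = (\<lambda>(i,j). A $$ (i, j) / A $$ (i, prim_col i) * unit_mat m (prim_col i) j $$ (a, c))"
  have f: "f (i,j) = (if a = prim_col i \<and> c = j then A $$ (i,j) / A $$ (i, prim_col i) else 0)" for i j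
    unfolding f_def unit_mat_def using am cm by auto
  have "sum f cob = N $$ (a,c)"
  proof (cases "cob_col c \<and> a = prim_col (c - Suc n)")
    case True
    have "sum f cob = f (c - Suc n, c)"
    proof (rule sum_eq_single_term[OF finite_cob])
      show "(c - Suc n, c) \<in> cob" using True unfolding cob_col_def by auto
      fix x assume x: "x \<in> cob" "x \<noteq> (c - Suc n, c)"
      obtain i j where ij: "x = (i,j)" by fastforce
      then show "f x = 0" using x cob_cob_col[of i j] f[of i j] by auto
    qed
    then show ?thesis using True f N_index[OF am cm] cob_coeff_def by simp
  next
    case False
    have "f (i,j) = 0" if "(i,j) \<in> cob" for i j
      using that False cob_cob_col[of i j] f[of i j] by auto
    then have "sum f cob = 0" by (intro sum.neutral) auto
    then show ?thesis using False N_index[OF am cm] by auto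
  qed
  then show "isa_T m (Suc n) (A,P) $$ (a,c) = (1\<^sub>m m - N) $$ (a,c)"
    unfolding isa_T_def f_def prim_col_def using am cm N_carrier by (simp add: cob_def case_prod_beta')
qed (auto simp: isa_T_def N_def)

text \<open>N is square-zero: its nonzero columns are change-of-basis columns, which carry no
  primary pivot, while its nonzero rows are primary pivot columns.\<close>
lemma N_square_zero: "N * N = 0\<^sub>m m m"
proof (rule eq_matI)
  fix a c assume "a < dim_row (0\<^sub>m m m :: rat mat)" "c < dim_col (0\<^sub>m m m :: rat mat)"
  then have am: "a < m" "c < m" by auto
  have "N $$ (a,k) * N $$ (k,c) = 0" if k: "k < m" for k
  proof (rule ccontr)
    assume "N $$ (a,k) * N $$ (k,c) \<noteq> 0"
    then have "cob_col k" "k = prim_col (c - Suc n)" "cob_col c"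
      using N_nonzeroD[of a k] N_nonzeroD[of k c] am k by auto
    then show False using cob_colD(3)[of c] cob_colD(5)[of k] by auto
  qed
  then have "(N * N) $$ (a,c) = 0"
    unfolding mat_mult_index_sum[OF N_carrier N_carrier am] by (intro sum.neutral) auto
  then show "(N * N) $$ (a,c) = (0\<^sub>m m m :: rat mat) $$ (a,c)" using am by simp
qed (auto simp: N_def)

definition AT :: "rat mat" where "AT = A * (1\<^sub>m m - N)"
definition Anext :: "rat mat" where "Anext = (1\<^sub>m m + N) * A * (1\<^sub>m m - N)"

lemma isa_step_eq: "isa_step m (Suc n) (A,P) = (Anext, P \<union> new)"
  unfolding isa_step_def Let_def isa_T_eq mat_inv_one_minus_square_zero(2)[OF N_carrier N_square_zero]
    Anext_def new_def cand_def cob_def by simp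

lemma AT_carrier: "AT \<in> carrier_mat m m"
  unfolding AT_def using A_carrier N_carrier by auto

lemma Anext_carrier: "Anext \<in> carrier_mat m m"
  unfolding Anext_def using A_carrier N_carrier by auto

lemma AT_index:
  assumes xm: "x < m" and ym: "y < m"
  shows "AT $$ (x,y) = A $$ (x,y) - (if cob_col y then A $$ (x, prim_col (y - Suc n)) * cob_coeff y else 0)"
proof -
  have T: "1\<^sub>m m - N \<in> carrier_mat m m" using N_carrier by auto
  have "AT $$ (x,y) = (\<Sum>k<m. A $$ (x,k) * (1\<^sub>m m - N) $$ (k,y))"
    unfolding AT_def by (rule mat_mult_index_sum[OF A_carrier T xm ym])
  also have "\<dots> = (\<Sum>k<m. A $$ (x,k) * (1\<^sub>m m) $$ (k,y)) - (\<Sum>k<m. A $$ (x,k) * N $$ (k,y))"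
    using ym N_carrier by (simp add: sum_subtractf algebra_simps)
  also have "(\<Sum>k<m. A $$ (x,k) * (1\<^sub>m m) $$ (k,y)) = A $$ (x,y)"
    using ym by (subst sum_eq_single_term[of _ y]) auto
  also have "(\<Sum>k<m. A $$ (x,k) * N $$ (k,y)) =
      (if cob_col y then A $$ (x, prim_col (y - Suc n)) * cob_coeff y else 0)"
  proof (cases "cob_col y")
    case True
    have pm: "prim_col (y - Suc n) < m" using cob_colD(7)[OF True] ym by simp
    show ?thesis using True pm ym
      by (subst sum_eq_single_term[of _ "prim_col (y - Suc n)"]) (auto simp: N_index)
  next
    case False
    then show ?thesis using ym by (auto simp: N_index intro!: sum.neutral)
  qed
  finally show ?thesis .
qed

lemma Anext_index:
  assumes xm: "x < m" and ym: "y < m"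
  shows "Anext $$ (x,y) = AT $$ (x,y) + (\<Sum>j<m. N $$ (x,j) * AT $$ (j,y))"
proof -
  have T: "1\<^sub>m m + N \<in> carrier_mat m m" using N_carrier by auto
  have "Anext = (1\<^sub>m m + N) * AT"
    unfolding Anext_def AT_def using A_carrier N_carrier by (intro assoc_mult_mat) auto
  then have "Anext $$ (x,y) = (\<Sum>j<m. (1\<^sub>m m + N) $$ (x,j) * AT $$ (j,y))"
    using mat_mult_index_sum[OF T AT_carrier xm ym] by simp
  also have "\<dots> = (\<Sum>j<m. (1\<^sub>m m) $$ (x,j) * AT $$ (j,y)) + (\<Sum>j<m. N $$ (x,j) * AT $$ (j,y))"
    using xm N_carrier by (simp add: sum.distrib algebra_simps)
  also have "(\<Sum>j<m. (1\<^sub>m m) $$ (x,j) * AT $$ (j,y)) = AT $$ (x,y)"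
    using xm by (subst sum_eq_single_term[of _ x]) auto
  finally show ?thesis .
qed

lemma Anext_eq_AT:
  assumes "x < m" "y < m" and "\<And>j. j < m \<Longrightarrow> N $$ (x,j) \<noteq> 0 \<Longrightarrow> AT $$ (j,y) = 0"
  shows "Anext $$ (x,y) = AT $$ (x,y)"
proof -
  have "N $$ (x,j) * AT $$ (j,y) = 0" if "j < m" for j
    using assms(3)[OF that] by (cases "N $$ (x,j) = 0") auto
  then show ?thesis unfolding Anext_index[OF assms(1,2)] by (simp add: sum.neutral)
qed

text \<open>Both steps keep the matrix strictly upper triangular, since every operation adds
  an earlier column to a later one, resp. a later row to an earlier one.\<close>
lemma AT_strictly_upper: "x < m \<Longrightarrow> y < m \<Longrightarrow> y \<le> x \<Longrightarrow> AT $$ (x,y) = 0"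
  using AT_index strictly_upper cob_colD(7)[of y] by auto

lemma Anext_strictly_upper:
  assumes "x < m" "y < m" "y \<le> x"
  shows "Anext $$ (x,y) = 0"
proof -
  have "AT $$ (j,y) = 0" if "j < m" "N $$ (x,j) \<noteq> 0" for j
    using AT_strictly_upper[of j y] N_nonzeroD(3)[OF that(2)] assms that by simp
  then show ?thesis using Anext_eq_AT[OF assms(1,2)] AT_strictly_upper[OF assms] by simp
qed

lemma next_pivot_col_unique: "(a,c) \<in> P \<union> new \<Longrightarrow> (a',c) \<in> P \<union> new \<Longrightarrow> a = a'"
  using pivot_col_unique newD by blast

lemma next_pivot_row_unique:
  assumes "(a,c) \<in> P \<union> new" "(a,c') \<in> P \<union> new"
  shows "c = c'"
proof (cases "(a,c) \<in> P")
  case True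
  then show ?thesis using assms pivot_row_unique newD by blast
next
  case False
  then have "(a,c) \<in> new" "(a,c') \<in> new" using assms newD by blast+
  then show ?thesis using newD[of a c] newD[of a c'] by auto
qed

lemma next_pivot_band: "(a,c) \<in> P \<union> new \<Longrightarrow> a < c \<and> c < m \<and> c - a \<le> Suc n"
  using pivot_band newD by fastforce

text \<open>Sweeping a change-of-basis column y clears it from row y-(n+1) downwards: the pivot
  entry is cancelled exactly, and below it both y and the pivot column were already clear.\<close>
lemma AT_cob_col_zero:
  assumes y: "cob_col y" and x: "y - Suc n \<le> x" "x < y"
  shows "AT $$ (x,y) = 0"
proof -
  define i0 where "i0 = y - Suc n"
  define p0 where "p0 = prim_col i0"
  have ip: "(i0,p0) \<in> P" "i0 < p0" "p0 < y" "A $$ (i0,p0) \<noteq> 0" "\<And>a. (a,y) \<notin> P" "y < m"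
    using cob_colD[OF y] unfolding i0_def p0_def by auto
  have ATxy: "AT $$ (x,y) = A $$ (x,y) - A $$ (x,p0) * cob_coeff y"
    using AT_index[of x y] x ip y unfolding p0_def i0_def by auto
  consider "x = i0" | "i0 < x" using x unfolding i0_def by linarith
  then show ?thesis
  proof cases
    case 1
    then show ?thesis using ATxy ip(4) unfolding cob_coeff_def p0_def i0_def by simp
  next
    case 2
    have "A $$ (x,y) = 0"
      using x 2 ip(5,6) unfolding i0_def by (intro swept_zero) auto
    moreover have "A $$ (x,p0) = 0"
    proof (cases "p0 \<le> x")
      case False
      have "p0 - x \<le> n" using pivot_band[OF ip(1)] 2 by linarith
      moreover have "\<And>a. (a,p0) \<in> P \<Longrightarrow> a < x" using pivot_col_unique ip(1) 2 by blast
      ultimately show ?thesis using False ip by (intro swept_zero) auto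
    qed (use strictly_upper x ip in auto)
    ultimately show ?thesis using ATxy by simp
  qed
qed

lemma AT_swept_zero:
  assumes xy: "x < y" "y < m" "y - x \<le> Suc n" and H: "\<And>a. (a,y) \<in> P \<union> new \<Longrightarrow> a < x"
  shows "AT $$ (x,y) = 0"
proof (cases "cob_col y")
  case True
  then show ?thesis using AT_cob_col_zero xy by simp
next
  case False
  then have ATxy: "AT $$ (x,y) = A $$ (x,y)" using AT_index[of x y] xy by auto
  show ?thesis
  proof (cases "y - x \<le> n")
    case True
    then show ?thesis using ATxy xy H by (auto intro: swept_zero)
  next
    case False
    then have d: "y - x = Suc n" using xy by auto
    have nop: "(a,y) \<notin> P" for a
      using H[of a] pivot_band[of a y] d by fastforce
    show ?thesis
    proof (rule ccontr)
      assume "AT $$ (x,y) \<noteq> 0"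
      then have cand: "(x,y) \<in> cand" unfolding cand_iff using xy d ATxy nop by auto
      then show False
        using H[of x] \<open>\<not> cob_col y\<close> cob_cob_col cob_iff new_iff by blast
    qed
  qed
qed

lemma Anext_eq_AT_above_pivots:
  assumes xy: "x < y" "y < m" "y - x \<le> Suc n" and H: "\<And>a. (a,y) \<in> P \<union> new \<Longrightarrow> a \<le> x"
  shows "Anext $$ (x,y) = AT $$ (x,y)"
proof (rule Anext_eq_AT)
  fix j assume j: "j < m" "N $$ (x,j) \<noteq> 0"
  then have "x < j" using N_nonzeroD(3) xy by auto
  show "AT $$ (j,y) = 0"
  proof (cases "y \<le> j")
    case False
    have "a < j" if "(a,y) \<in> P \<union> new" for a using H[OF that] \<open>x < j\<close> by simp
    then show ?thesis using False xy \<open>x < j\<close> by (intro AT_swept_zero) auto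
  qed (use AT_strictly_upper j xy in auto)
qed (use xy in auto)

lemma Anext_swept_zero:
  assumes "x < y" "y < m" "y - x \<le> Suc n" and "\<And>a. (a,y) \<in> P \<union> new \<Longrightarrow> a < x"
  shows "Anext $$ (x,y) = 0"
proof -
  have "Anext $$ (x,y) = AT $$ (x,y)"
    by (rule Anext_eq_AT_above_pivots[OF assms(1-3)]) (rule less_imp_le[OF assms(4)])
  also have "\<dots> = 0" by (rule AT_swept_zero[OF assms])
  finally show ?thesis .
qed

text \<open>Primary pivots keep their value: neither their row nor their column is modified
  at the pivot position.\<close>
lemma Anext_pivot_unchanged:
  assumes ac: "(a,c) \<in> P \<union> new"
  shows "Anext $$ (a,c) = A $$ (a,c)"
proof -
  have acb: "a < c" "c < m" "c - a \<le> Suc n" using next_pivot_band[OF ac] by auto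
  have "\<not> cob_col c"
  proof
    assume cc: "cob_col c"
    then have "(a,c) \<in> new" using ac cob_colD(5) by auto
    then show False using cc newD cob_col_def new_def by auto
  qed
  then have "AT $$ (a,c) = A $$ (a,c)" using AT_index[of a c] acb by auto
  moreover have "Anext $$ (a,c) = AT $$ (a,c)"
    using acb next_pivot_col_unique[OF ac] by (intro Anext_eq_AT_above_pivots) auto
  ultimately show ?thesis by simp
qed

lemma Anext_pivot_nonzero: "(a,c) \<in> P \<union> new \<Longrightarrow> Anext $$ (a,c) \<noteq> 0"
  using Anext_pivot_unchanged pivot_nonzero newD by fastforce

lemma Anext_square_zero: "Anext * Anext = 0\<^sub>m m m"
  unfolding Anext_def
proof (rule similar_square_zero[OF A_carrier _ _ _ square_zero])
  show "(1\<^sub>m m - N) * (1\<^sub>m m + N) = 1\<^sub>m m"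
    by (rule mat_inv_one_minus_square_zero(1)[OF N_carrier N_square_zero])
qed (use N_carrier in auto)

text \<open>A minor on rows I and columns J is unchanged by iteration n+1 if no row of I receives
  a row operation and J is closed under the column operations: then the block of Anext
  equals the block of A times a unit upper triangular block of T.\<close>
lemma submatrix_det_step:
  assumes I: "I \<subseteq> {..<m}" and J: "J \<subseteq> {..<m}" and cIJ: "card I = card J"
    and rows: "\<And>x k. x \<in> I \<Longrightarrow> cob_col k \<Longrightarrow> x \<noteq> prim_col (k - Suc n)"
    and cols: "\<And>y. y \<in> J \<Longrightarrow> cob_col y \<Longrightarrow> prim_col (y - Suc n) \<in> J"
  shows "det (submatrix Anext I J) = det (submatrix A I J)"
proof -
  define T where "T = 1\<^sub>m m - N"
  have T: "T \<in> carrier_mat m m" unfolding T_def using N_carrier by auto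
  have T_index: "T $$ (k,y) = (if k = y then 1 else 0) - N $$ (k,y)" if "k < m" "y < m" for k y
    unfolding T_def using that N_carrier by simp
  have "submatrix Anext I J = submatrix AT I J"
  proof (rule submatrix_cong[OF Anext_carrier AT_carrier I J])
    fix x y assume "x \<in> I" "y \<in> J"
    moreover have "N $$ (x,j) = 0" if "x \<in> I" "j < m" for j
      using rows[OF that(1)] N_nonzeroD(1,2)[of x j] that I by blast
    ultimately show "Anext $$ (x,y) = AT $$ (x,y)" using I J by (intro Anext_eq_AT) auto
  qed
  also have "\<dots> = submatrix A I J * submatrix T J J"
    unfolding AT_def T_def[symmetric]
  proof (rule submatrix_mult_closed[OF A_carrier T I J])
    fix k y assume k: "k < m" "k \<notin> J" and y: "y \<in> J"
    have "N $$ (k,y) = 0" using cols[OF y] N_nonzeroD(1,2)[of k y] k y J by blast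
    then show "T $$ (k,y) = 0" using T_index[of k y] k y J by auto
  qed
  finally have "det (submatrix Anext I J) = det (submatrix A I J) * det (submatrix T J J)"
    using submatrix_carrier[OF A_carrier I J] submatrix_carrier[OF T J J] cIJ
    by (simp add: det_mult)
  moreover have "det (submatrix T J J) = 1"
  proof (rule det_principal_submatrix_unitriangular[OF T J])
    have "N $$ (k,j) = 0" if "j \<le> k" "k < m" for j k
      using N_nonzeroD(3)[of k j] that by fastforce
    then show "upper_triangular T" "\<And>k. k < m \<Longrightarrow> T $$ (k,k) = 1"
      using T T_index unfolding upper_triangular_def by auto
  qed
  ultimately show ?thesis by simp
qed

end

text \<open>The unswept input: a strictly upper triangular square-zero matrix without pivots.
  The partition of a connection matrix plays no further role.\<close>
lemma isa_invariant_init: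
  assumes "connection_matrix m D b J"
  shows "isa_invariant m 0 D {}"
proof
  show "D \<in> carrier_mat m m" and "D * D = 0\<^sub>m m m"
    using assms unfolding connection_matrix_def by auto
  have nz: "\<And>i j. i < m \<Longrightarrow> j < m \<Longrightarrow> D $$ (i,j) \<noteq> 0 \<Longrightarrow> i < j"
    using assms unfolding connection_matrix_def by auto
  show "D $$ (x, y) = 0" if "x < m" "y < m" "y \<le> x" for x y
    using nz[of x y] that by fastforce
qed auto

lemma isa_invariant_step:
  assumes "isa_invariant m n A P"
  shows "isa_invariant m (Suc n) (isa_invariant.Anext m n A P) (P \<union> isa_invariant.new m n A P)"
proof -
  interpret S: isa_invariant m n A P by fact
  show ?thesis
    by unfold_locales
      (fact S.Anext_carrier S.Anext_strictly_upper S.next_pivot_band S.next_pivot_row_unique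
         S.next_pivot_col_unique S.Anext_pivot_nonzero S.Anext_swept_zero S.Anext_square_zero)+
qed

locale isa_run =
  fixes m :: nat and D :: "rat mat"
  assumes init: "isa_invariant m 0 D {}"
begin

abbreviation mat_at :: "nat \<Rightarrow> rat mat" where
  "mat_at n \<equiv> fst (isa_state m D n)"
abbreviation piv_at :: "nat \<Rightarrow> (nat \<times> nat) set" where
  "piv_at n \<equiv> snd (isa_state m D n)"
abbreviation F :: "rat mat" where "F \<equiv> isa_final_matrix m D"
abbreviation PF :: "(nat \<times> nat) set" where "PF \<equiv> isa_primary_pivots m D"

lemma invariant: "isa_invariant m n (mat_at n) (piv_at n)"
proof (induction n)
  case (Suc n)
  interpret S: isa_invariant m n "mat_at n" "piv_at n" by (fact Suc.IH)
  show ?case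
    using isa_invariant_step[OF Suc.IH] S.isa_step_eq by (simp add: prod_eq_iff)
qed (simp add: init)

lemma state_Suc:
  "mat_at (Suc n) = isa_invariant.Anext m n (mat_at n) (piv_at n)"
  "piv_at (Suc n) = piv_at n \<union> isa_invariant.new m n (mat_at n) (piv_at n)"
  using isa_invariant.isa_step_eq[OF invariant[of n]] by (simp_all add: prod_eq_iff)

lemma final_invariant: "isa_invariant m (m - 1) F PF"
  unfolding isa_final_matrix_def isa_primary_pivots_def by (rule invariant)

lemma pivots_by_diagonal:
  assumes "n \<le> K"
  shows "piv_at n = {(a,c) \<in> piv_at K. c - a \<le> n}"
  using assms
proof (induction K)
  case 0
  then show ?case using isa_invariant.pivot_band[OF invariant[of 0]] by auto
next
  case (Suc K)
  show ?case
  proof (cases "n = Suc K")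
    case True
    then show ?thesis using isa_invariant.pivot_band[OF invariant[of n]] by auto
  next
    case False
    then have "n \<le> K" using Suc.prems by simp
    moreover have "c - a = Suc K" if "(a,c) \<in> isa_invariant.new m K (mat_at K) (piv_at K)" for a c
      using isa_invariant.newD[OF invariant that] by auto
    ultimately show ?thesis using Suc.IH state_Suc(2)[of K] by auto
  qed
qed

lemma final_swept_zero:
  assumes "x < m" "y < m" and "\<And>a. (a,y) \<in> PF \<Longrightarrow> a < x"
  shows "F $$ (x,y) = 0"
proof (cases "x < y")
  case True
  then show ?thesis using assms by (intro isa_invariant.swept_zero[OF final_invariant]) auto
qed (use assms isa_invariant.strictly_upper[OF final_invariant] in auto)

text \<open>No column of a primary pivot carries a primary pivot, since F * F = 0: otherwise
  take the lowest pivot row r whose pivot column q meets column d nonzero; then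
  (F * F)(r,d) = F(r,q) F(q,d) \<noteq> 0.\<close>
lemma pivot_col_not_pivot_row:
  assumes ac: "(a,c) \<in> PF" and cd: "(c,d) \<in> PF"
  shows False
proof -
  interpret S: isa_invariant m "m - 1" F PF by (rule final_invariant)
  define rows where "rows = {r. \<exists>q. (r,q) \<in> PF \<and> F $$ (q,d) \<noteq> 0}"
  have "rows \<subseteq> {..<m}"
  proof
    fix r assume "r \<in> rows"
    then obtain q where "(r,q) \<in> PF" unfolding rows_def by blast
    then show "r \<in> {..<m}" using S.pivot_band[of r q] by simp
  qed
  then have fin: "finite rows" by (rule finite_subset) simp
  have "a \<in> rows" unfolding rows_def using ac S.pivot_nonzero[OF cd] by auto
  define r where "r = Max rows"
  have "r \<in> rows" unfolding r_def using fin \<open>a \<in> rows\<close> by (intro Max_in) auto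
  then obtain q where rq: "(r,q) \<in> PF" and qd: "F $$ (q,d) \<noteq> 0" unfolding rows_def by auto
  have rmax: "\<And>r'. r' \<in> rows \<Longrightarrow> r' \<le> r" unfolding r_def using fin by auto
  have bounds: "r < m" "q < m" "d < m" using S.pivot_band[OF rq] S.pivot_band[OF cd] by auto
  have "(F * F) $$ (r,d) = (\<Sum>k<m. F $$ (r,k) * F $$ (k,d))"
    using mat_mult_index_sum[OF S.A_carrier S.A_carrier bounds(1,3)] .
  also have "\<dots> = F $$ (r,q) * F $$ (q,d)"
  proof (rule sum_eq_single_term)
    fix k assume k: "k \<in> {..<m}" "k \<noteq> q"
    have "F $$ (r,k) = 0" if "F $$ (k,d) \<noteq> 0"
    proof (rule final_swept_zero)
      fix a' assume ak: "(a',k) \<in> PF"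
      have "a' \<in> rows" unfolding rows_def using ak that by blast
      moreover have "a' \<noteq> r" using S.pivot_row_unique[of r q k] ak rq k(2) by blast
      ultimately show "a' < r" using rmax[of a'] by simp
    qed (use bounds k in auto)
    then show "F $$ (r,k) * F $$ (k,d) = 0" by auto
  qed (use bounds in auto)
  finally have "(F * F) $$ (r,d) \<noteq> 0" using S.pivot_nonzero[OF rq] qd by simp
  then show False using S.square_zero bounds by simp
qed

text \<open>A column receiving a change-of-basis operation at iteration n+1 has no pivot on
  diagonals 1..n+1, so its final pivot, if any, lies strictly above row y-(n+1).\<close>
lemma pivot_above_cob_entry:
  assumes n: "Suc n \<le> m - 1" and y: "isa_invariant.cob_col m n (mat_at n) (piv_at n) y"
    and ay: "(a,y) \<in> PF"
  shows "a < y - Suc n"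
proof (rule ccontr)
  interpret S: isa_invariant m n "mat_at n" "piv_at n" by (rule invariant)
  assume "\<not> a < y - Suc n"
  then have "y - a \<le> Suc n" by linarith
  then have "(a,y) \<in> piv_at (Suc n)"
    using pivots_by_diagonal[OF n] ay unfolding isa_primary_pivots_def by auto
  moreover have "(a,y) \<notin> piv_at n" using S.cob_colD(5)[OF y] .
  ultimately have new: "(a,y) \<in> S.new" using state_Suc(2) by auto
  then have "(a,y) \<in> S.cob" using y S.newD unfolding S.cob_col_def by auto
  then show False using new unfolding S.new_def by auto
qed

text \<open>Sets of final pivots closed under passing to pivots lying lower and further left;
  on such sets the ISA never mixes rows or columns from outside the set.\<close>
definition pivot_down_closed :: "(nat \<times> nat) set \<Rightarrow> bool" where
  "pivot_down_closed Q \<longleftrightarrow> Q \<subseteq> PF \<and>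
     (\<forall>a c a' c'. (a,c) \<in> Q \<longrightarrow> (a',c') \<in> PF \<longrightarrow> a < a' \<longrightarrow> c' < c \<longrightarrow> (a',c') \<in> Q)"

lemma pivot_set_block:
  assumes "Q \<subseteq> PF"
  shows "finite Q" "Q \<subseteq> {..<m} \<times> {..<m}" "inj_on fst Q" "inj_on snd Q"
    and "card (fst`Q) = card (snd`Q)"
proof -
  interpret S: isa_invariant m "m - 1" F PF by (rule final_invariant)
  show sub: "Q \<subseteq> {..<m} \<times> {..<m}" using assms S.pivot_band by fastforce
  then show "finite Q" by (rule finite_subset) simp
  show "inj_on fst Q" using assms S.pivot_row_unique unfolding inj_on_def by (metis prod.collapse subsetD)
  show "inj_on snd Q" using assms S.pivot_col_unique unfolding inj_on_def by (metis prod.collapse subsetD)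
  then show "card (fst`Q) = card (snd`Q)"
    using card_image \<open>inj_on fst Q\<close> by metis
qed

lemma submatrix_det_preserved:
  assumes Q: "pivot_down_closed Q"
  shows "n \<le> m - 1 \<Longrightarrow> det (submatrix (mat_at n) (fst`Q) (snd`Q)) = det (submatrix D (fst`Q) (snd`Q))"
proof (induction n)
  case (Suc n)
  interpret S: isa_invariant m n "mat_at n" "piv_at n" by (rule invariant)
  have QP: "Q \<subseteq> PF" using Q unfolding pivot_down_closed_def by blast
  note block = pivot_set_block[OF QP]
  have prim_pivot: "(y - Suc n, S.prim_col (y - Suc n)) \<in> PF" if "S.cob_col y" for y
    using S.cob_colD(3)[OF that] pivots_by_diagonal[of n "m - 1"] Suc.prems
    unfolding isa_primary_pivots_def by auto
  have "det (submatrix S.Anext (fst`Q) (snd`Q)) = det (submatrix (mat_at n) (fst`Q) (snd`Q))"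
  proof (rule S.submatrix_det_step)
    show "fst`Q \<subseteq> {..<m}" "snd`Q \<subseteq> {..<m}" using block(2) by auto
    show "card (fst`Q) = card (snd`Q)" by (rule block(5))
  next
    fix x k assume x: "x \<in> fst`Q" and k: "S.cob_col k"
    then obtain c where "(x,c) \<in> PF" using QP by force
    then show "x \<noteq> S.prim_col (k - Suc n)"
      using pivot_col_not_pivot_row prim_pivot[OF k] by blast
  next
    fix y assume y: "y \<in> snd`Q" and cy: "S.cob_col y"
    then obtain a where ay: "(a,y) \<in> Q" by force
    then have "a < y - Suc n" using pivot_above_cob_entry[OF Suc.prems cy] QP by auto
    then have "(y - Suc n, S.prim_col (y - Suc n)) \<in> Q"
      using Q ay prim_pivot[OF cy] S.cob_colD(7)[OF cy] unfolding pivot_down_closed_def by blast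
    then show "S.prim_col (y - Suc n) \<in> snd`Q" by force
  qed
  then show ?case using state_Suc(1) Suc.IH Suc.prems by simp
qed simp

text \<open>The minor of the input on a down-closed pivot block is, up to sign, the product of
  the final pivots: in the final matrix the block is triangular after reordering columns.\<close>
lemma pivot_block_abs_det:
  assumes Q: "pivot_down_closed Q"
  shows "\<bar>det (submatrix D (fst`Q) (snd`Q))\<bar> = (\<Prod>(a,c)\<in>Q. \<bar>F $$ (a,c)\<bar>)"
proof -
  interpret S: isa_invariant m "m - 1" F PF by (rule final_invariant)
  have QP: "Q \<subseteq> PF" using Q unfolding pivot_down_closed_def by blast
  note block = pivot_set_block[OF QP]
  have "det (submatrix F (fst`Q) (snd`Q)) = det (submatrix D (fst`Q) (snd`Q))"
    using submatrix_det_preserved[OF Q, of "m - 1"] unfolding isa_final_matrix_def by simp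
  moreover have "\<bar>det (submatrix F (fst`Q) (snd`Q))\<bar> = (\<Prod>(a,c)\<in>Q. \<bar>F $$ (a,c)\<bar>)"
  proof (rule abs_det_pivot_block[OF S.A_carrier block(1-4)])
    fix a c a' c' assume ac: "(a,c) \<in> Q" and ac': "(a',c') \<in> Q" and "a < a'"
    moreover have "a' < m" "c < m" using ac ac' block(2) by auto
    ultimately show "F $$ (a',c) = 0"
      using QP S.pivot_col_unique by (intro final_swept_zero) blast+
  qed
  ultimately show ?thesis by simp
qed

text \<open>For a totally unimodular input all final primary pivots are units: the minors on
  the blocks of pivots south-west of (i,p), with and without (i,p), are nonzero and in
  {0,1,-1}, and their quotient is F(i,p) up to sign.\<close>
lemma final_pivot_abs_one:
  assumes TU: "totally_unimodular D" and ip: "(i,p) \<in> PF"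
  shows "\<bar>F $$ (i,p)\<bar> = 1"
proof -
  interpret S: isa_invariant m "m - 1" F PF by (rule final_invariant)
  have unit_minor: "(\<Prod>(a,c)\<in>Q. \<bar>F $$ (a,c)\<bar>) = 1" if Q: "pivot_down_closed Q" for Q
  proof -
    have QP: "Q \<subseteq> PF" using Q unfolding pivot_down_closed_def by blast
    note block = pivot_set_block[OF QP]
    have "fst`Q \<subseteq> {0..<dim_row D}" "snd`Q \<subseteq> {0..<dim_col D}"
      using block(2) isa_invariant.A_carrier[OF init] by fastforce+
    then have "det (submatrix D (fst`Q) (snd`Q)) \<in> {0, 1, -1}"
      using TU block(5) unfolding totally_unimodular_def by blast
    moreover have "(\<Prod>(a,c)\<in>Q. \<bar>F $$ (a,c)\<bar>) \<noteq> 0"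
      using block(1) QP S.pivot_nonzero by (auto simp: prod_zero_iff)
    ultimately show ?thesis using pivot_block_abs_det[OF Q] by auto
  qed
  define Q0 where "Q0 = {(a,c) \<in> PF. i < a \<and> c < p}"
  have Q0: "pivot_down_closed Q0" and Q: "pivot_down_closed (insert (i,p) Q0)"
    unfolding pivot_down_closed_def Q0_def using ip by auto
  have "(i,p) \<notin> Q0" "finite Q0" unfolding Q0_def using pivot_set_block(1)[of Q0] Q0
    unfolding pivot_down_closed_def Q0_def by auto
  then show ?thesis using unit_minor[OF Q] unit_minor[OF Q0] by simp
qed

end

theorem mainTheorem9:
  fixes m b :: nat and D :: "rat mat" and J :: "nat \<Rightarrow> nat set"
  assumes "connection_matrix m D b J"
    and "\<forall>i<m. \<forall>j<m. D $$ (i, j) \<in> {0, 1, -1}"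
    and "totally_unimodular D"
  shows "\<forall>(i, j)\<in>isa_primary_pivots m D. isa_final_matrix m D $$ (i, j) \<in> {1, -1}"
proof -
  interpret isa_run m D by (rule isa_run.intro[OF isa_invariant_init[OF assms(1)]])
  have "F $$ (i,p) \<in> {1, -1}" if "(i,p) \<in> PF" for i p
    using final_pivot_abs_one[OF assms(3) that] by (auto simp: abs_if split: if_splits)
  then show ?thesis by blast
qed

end
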